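(* Let $\mathbb{F}$ be a field, $d\geq 3$ and $V$ a vector space over $\mathbb{F}$ of dimension $d+1$. Let $E^*_0,\dots,E^*_d$ be a system of mutually orthogonal idempotents in $\mathrm{End}(V)$ and $A\in\mathrm{End}(V)$ with $E^*_iAE^*_j=0$ if $|i-j|>1$ and $E^*_iAE^*_j\neq0$ if $|i-j|=1$. Assume $A$ is multiplicity-free and bipartite with primitive idempotents $E_0,\dots,E_d$ and eigenvalues $\theta_0,\dots,\theta_d$. Let $\theta^*_0,\dots,\theta^*_d\in\mathbb{F}$ be mutually distinct and $A^*=\sum_i\theta^*_iE^*_i$. Assume $E_0$ is normalizing and that in $\Delta$ the vertex $E_0$ is adjacent to $E_1$ and to no other vertex. Then $\theta_0(\theta^*_{d-1}-\theta^*_1)=\theta_1(\theta^*_d-\theta^*_0)$, and both $\theta_0$ and $\theta_1$ are nonzero.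
   Context: A system of mutually orthogonal idempotents is a sequence $E^*_0,\dots,E^*_d$ of linear maps $V\to V$ with $E^*_iE^*_j=\delta_{ij}E^*_i$ and $\operatorname{rank}E^*_i=1$. $A$ is multiplicity-free if it has $d+1$ mutually distinct eigenvalues in $\mathbb{F}$; the primitive idempotent $E_i$ for $\theta_i$ is the projection onto the $\theta_i$-eigenspace along the sum of the other eigenspaces. $A$ is bipartite if $\operatorname{tr}(E^*_iA)=0$ for all $i$. $\Delta$ is the graph with vertices $E_0,\dots,E_d$, where $E_i\neq E_j$ are adjacent iff $E_iA^*E_j\neq0$. For a basis $v_0,\dots,v_d$, the matrix $Y$ representing $A$ satisfies $Av_j=\sum_iY_{ij}v_i$. An eigenvalue $\theta$ of $A$ is normalizing if there is a basis $v_0,\dots,v_d$ with $v_i\in E^*_iV$ such that every row of the matrix representing $A$ sums to $\theta$; $E_i$ is normalizing if $\theta_i$ is. *)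

theory Defs
  imports "Jordan_Normal_Form.DL_Rank" "Jordan_Normal_Form.Char_Poly"
begin

text \<open>V is modelled as F^n with n = d+1; End(V) as n x n matrices over the field.\<close>

definition mat_trace :: "'a::comm_ring_1 mat \<Rightarrow> 'a" where
  "mat_trace M = (\<Sum>i<dim_row M. M $$ (i, i))"

definition mo_idempotents :: "nat \<Rightarrow> (nat \<Rightarrow> 'a::field mat) \<Rightarrow> bool" where
  "mo_idempotents d Es \<longleftrightarrow>
     (\<forall>i\<le>d. Es i \<in> carrier_mat (d+1) (d+1) \<and> vec_space.rank (d+1) (Es i) = 1) \<and>
     (\<forall>i\<le>d. \<forall>j\<le>d. Es i * Es j = (if i = j then Es i else 0\<^sub>m (d+1) (d+1)))"

definition multiplicity_free :: "nat \<Rightarrow> 'a::field mat \<Rightarrow> (nat \<Rightarrow> 'a) \<Rightarrow> bool" where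
  "multiplicity_free d A th \<longleftrightarrow>
     (\<forall>i\<le>d. eigenvalue A (th i)) \<and> inj_on th {0..d}"

definition primitive_idempotent ::
    "nat \<Rightarrow> 'a::field mat \<Rightarrow> (nat \<Rightarrow> 'a) \<Rightarrow> nat \<Rightarrow> 'a mat \<Rightarrow> bool" where
  "primitive_idempotent d A th i E \<longleftrightarrow>
     E \<in> carrier_mat (d+1) (d+1) \<and>
     (\<forall>v \<in> carrier_vec (d+1). A *\<^sub>v v = th i \<cdot>\<^sub>v v \<longrightarrow> E *\<^sub>v v = v) \<and>
     (\<forall>j\<le>d. j \<noteq> i \<longrightarrow>
        (\<forall>v \<in> carrier_vec (d+1). A *\<^sub>v v = th j \<cdot>\<^sub>v v \<longrightarrow> E *\<^sub>v v = 0\<^sub>v (d+1)))"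

definition bipartite :: "nat \<Rightarrow> (nat \<Rightarrow> 'a::field mat) \<Rightarrow> 'a mat \<Rightarrow> bool" where
  "bipartite d Es A \<longleftrightarrow> (\<forall>i\<le>d. mat_trace (Es i * A) = 0)"

text \<open>A* = sum_i ths i * Es i, written entrywise.\<close>
definition dual_mat :: "nat \<Rightarrow> (nat \<Rightarrow> 'a::field) \<Rightarrow> (nat \<Rightarrow> 'a mat) \<Rightarrow> 'a mat" where
  "dual_mat d ths Es = mat (d+1) (d+1) (\<lambda>(r, c). \<Sum>i\<le>d. ths i * Es i $$ (r, c))"

definition Delta_adj :: "nat \<Rightarrow> (nat \<Rightarrow> 'a::field mat) \<Rightarrow> 'a mat \<Rightarrow> nat \<Rightarrow> nat \<Rightarrow> bool" where
  "Delta_adj d E As i j \<longleftrightarrow> E i \<noteq> E j \<and> E i * As * E j \<noteq> 0\<^sub>m (d+1) (d+1)"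

text \<open>theta is normalizing: there is a basis v 0, ..., v d (columns of the invertible
  matrix P) with v i in Es i V, such that the matrix Y representing A
  (A v_j = sum_i Y_ij v_i, i.e. A P = P Y) has all row sums equal to theta.\<close>
definition normalizing :: "nat \<Rightarrow> (nat \<Rightarrow> 'a::field mat) \<Rightarrow> 'a mat \<Rightarrow> 'a \<Rightarrow> bool" where
  "normalizing d Es A \<theta> \<longleftrightarrow>
     (\<exists>v Y. (\<forall>i\<le>d. v i \<in> carrier_vec (d+1) \<and> (\<exists>w \<in> carrier_vec (d+1). v i = Es i *\<^sub>v w)) \<and>
        invertible_mat (mat_of_cols (d+1) (map v [0..<d+1])) \<and>
        Y \<in> carrier_mat (d+1) (d+1) \<and>
        A * mat_of_cols (d+1) (map v [0..<d+1]) = mat_of_cols (d+1) (map v [0..<d+1]) * Y \<and>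
        (\<forall>i\<le>d. (\<Sum>j\<le>d. Y $$ (i, j)) = \<theta>))"

end

theory Submission
  imports Defs
begin

text \<open>
  In the basis \<open>v\<^sub>0, \<dots>, v\<^sub>d\<close> (\<open>v\<^sub>i \<in> E\<^sup>*\<^sub>iV\<close>) witnessing that \<open>\<theta>\<^sub>0\<close> is normalizing,
  \<open>A\<close> becomes an irreducible tridiagonal matrix \<open>Y\<close> with zero diagonal (bipartiteness) and
  row sums \<open>\<theta>\<^sub>0\<close>, and \<open>A\<^sup>*\<close> becomes \<open>diag(\<theta>\<^sup>*\<^sub>0, \<dots>, \<theta>\<^sup>*\<^sub>d)\<close>. Since \<open>E\<^sub>0A\<^sup>*E\<^sub>j = 0\<close> for
  \<open>j \<notin> {0, 1}\<close>, testing on an eigenbasis of \<open>A\<close> gives \<open>E\<^sub>0A\<^sup>*A = \<theta>\<^sub>1E\<^sub>0A\<^sup>* + cE\<^sub>0\<close> for a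
  scalar \<open>c\<close>, besides \<open>E\<^sub>0A = \<theta>\<^sub>0E\<^sub>0\<close>. So a nonzero row \<open>f\<close> of \<open>E\<^sub>0P\<close>, \<open>P\<close> the basis matrix,
  satisfies \<open>fY = \<theta>\<^sub>0f\<close> and \<open>(f\<theta>\<^sup>*)Y = \<theta>\<^sub>1(f\<theta>\<^sup>*) + cf\<close>. Irreducibility forces
  \<open>f\<^sub>0 \<noteq> 0 \<noteq> f\<^sub>d\<close>, and columns \<open>0\<close> and \<open>d\<close> of \<open>Y\<close> have a single nonzero entry each, so
  \<open>\<theta>\<^sub>0\<theta>\<^sup>*\<^sub>1 = \<theta>\<^sub>1\<theta>\<^sup>*\<^sub>0 + c\<close> and \<open>\<theta>\<^sub>0\<theta>\<^sup>*\<^bsub>d-1\<^esub> = \<theta>\<^sub>1\<theta>\<^sup>*\<^sub>d + c\<close>; subtracting eliminates \<open>c\<close>.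
  Finally \<open>\<theta>\<^sub>0 = Y\<^bsub>01\<^esub> \<noteq> 0\<close> is the first row sum, and \<open>\<theta>\<^sub>1 = 0\<close> would force
  \<open>\<theta>\<^sup>*\<^sub>1 = \<theta>\<^sup>*\<^bsub>d-1\<^esub>\<close>.
\<close>

section \<open>Similar matrices, traces and diagonal matrices\<close>

lemma sum_eq_single:
  assumes "finite S" "a \<in> S" "\<And>i. i \<in> S \<Longrightarrow> i \<noteq> a \<Longrightarrow> g i = 0"
  shows "sum g S = g a"
  using sum.mono_neutral_left[of S "{a}" g] assms by auto

lemma smult_mat_mult_vec:
  assumes "M \<in> carrier_mat n m" "u \<in> carrier_vec m"
  shows "(k \<cdot>\<^sub>m M) *\<^sub>v u = k \<cdot>\<^sub>v (M *\<^sub>v u)"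
  using assms by (intro eq_vecI) (auto simp: scalar_prod_def sum_distrib_left mult.assoc)

lemma zero_mat_mult_vec [simp]: "u \<in> carrier_vec m \<Longrightarrow> 0\<^sub>m n m *\<^sub>v u = (0\<^sub>v n :: 'a::comm_ring_1 vec)"
  by (intro eq_vecI) (auto simp: scalar_prod_def)

lemma smult_zero_vec [simp]: "(k::'a::comm_ring_1) \<cdot>\<^sub>v 0\<^sub>v n = 0\<^sub>v n"
  by (intro eq_vecI) auto

abbreviation diag_unit_mat :: "nat \<Rightarrow> nat \<Rightarrow> 'a::{zero,one} mat" where
  "diag_unit_mat n i \<equiv> mat_diag n (\<lambda>k. if k = i then 1 else 0)"

lemma invertible_matE:
  assumes "invertible_mat P" and P: "P \<in> carrier_mat n n"
  obtains Q where "Q \<in> carrier_mat n n" "P * Q = 1\<^sub>m n" "Q * P = 1\<^sub>m n"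
proof -
  obtain Q where PQ: "P * Q = 1\<^sub>m n" and QP: "Q * P = 1\<^sub>m (dim_row Q)"
    using assms unfolding invertible_mat_def inverts_mat_def by auto
  have "dim_col Q = n" using arg_cong[OF PQ, of dim_col] by simp
  moreover have "dim_row Q = n" using arg_cong[OF QP, of dim_col] P by simp
  ultimately show ?thesis using that PQ QP by auto
qed

lemma similar_mat_witI_mult:
  assumes M: "M \<in> carrier_mat n n" and N: "N \<in> carrier_mat n n"
    and P: "P \<in> carrier_mat n n" and Q: "Q \<in> carrier_mat n n"
    and PQ: "P * Q = 1\<^sub>m n" and QP: "Q * P = 1\<^sub>m n" and MP: "M * P = P * N"
  shows "similar_mat_wit M N P Q"
proof (rule similar_mat_witI[OF PQ QP _ M N P Q])
  have "M = M * P * Q" using M P Q PQ by (simp add: assoc_mult_mat[OF M P Q])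
  then show "M = P * N * Q" unfolding MP .
qed

lemma similar_mat_wit_zero_iff:
  assumes sim: "similar_mat_wit M N P Q" and M: "M \<in> carrier_mat n n"
  shows "M = 0\<^sub>m n n \<longleftrightarrow> N = 0\<^sub>m n n"
proof -
  note MN = similar_mat_witD2[OF M sim]
  note NM = similar_mat_witD2[OF MN(5) similar_mat_wit_sym[OF sim]]
  show ?thesis
  proof
    assume "M = 0\<^sub>m n n"
    then show "N = 0\<^sub>m n n" using NM by simp
  next
    assume "N = 0\<^sub>m n n"
    then show "M = 0\<^sub>m n n" using MN by simp
  qed
qed

lemma mat_trace_mult_comm:
  assumes "M \<in> carrier_mat n m" "N \<in> carrier_mat m n"
  shows "mat_trace (M * N) = mat_trace (N * M)"
proof -
  have "mat_trace (M * N) = (\<Sum>i<n. \<Sum>k<m. M $$ (i,k) * N $$ (k,i))"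
    using assms by (simp add: mat_trace_def scalar_prod_def atLeast0LessThan)
  also have "\<dots> = (\<Sum>k<m. \<Sum>i<n. N $$ (k,i) * M $$ (i,k))"
    by (subst sum.swap) (simp add: mult.commute)
  also have "\<dots> = mat_trace (N * M)"
    using assms by (simp add: mat_trace_def scalar_prod_def atLeast0LessThan)
  finally show ?thesis .
qed

lemma similar_mat_wit_mat_trace:
  assumes sim: "similar_mat_wit M N P Q" and M: "M \<in> carrier_mat n n"
  shows "mat_trace M = mat_trace N"
proof -
  note MN = similar_mat_witD2[OF M sim]
  have "mat_trace M = mat_trace (P * (N * Q))"
    using MN by (simp add: assoc_mult_mat[of P n n N n Q n])
  also have "\<dots> = mat_trace (N * Q * P)"
    using MN by (intro mat_trace_mult_comm) auto
  also have "N * Q * P = N"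
    using MN by (simp add: assoc_mult_mat[of N n n Q n P n])
  finally show ?thesis .
qed

lemma mult_eq_mult_mat_diagI:
  fixes B :: "'a::comm_ring_1 mat"
  assumes B: "B \<in> carrier_mat n n" and P: "P \<in> carrier_mat n n"
    and cols: "\<And>j. j < n \<Longrightarrow> B *\<^sub>v col P j = f j \<cdot>\<^sub>v col P j"
  shows "B * P = P * mat_diag n f"
proof (rule mat_col_eqI)
  fix j assume "j < dim_col (P * mat_diag n f)"
  with P have j: "j < n" by (simp add: mat_diag_def)
  have "col (B * P) j = f j \<cdot>\<^sub>v col P j" by (simp only: col_mult2[OF B P j] cols[OF j])
  also have "\<dots> = col (P * mat_diag n f) j"
    using P j by (auto simp: mat_diag_mult_right mult.commute intro!: eq_vecI)
  finally show "col (B * P) j = col (P * mat_diag n f) j" .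
qed (use B P carrier_matD[OF mat_diag_dim[of n f]] in auto)

lemma mat_eq_on_invertible_cols:
  fixes W :: "'a::comm_ring_1 mat"
  assumes W: "W \<in> carrier_mat n n" and Wi: "Wi \<in> carrier_mat n n" and WWi: "W * Wi = 1\<^sub>m n"
    and M: "M \<in> carrier_mat m n" and N: "N \<in> carrier_mat m n"
    and cols: "\<And>j. j < n \<Longrightarrow> M *\<^sub>v col W j = N *\<^sub>v col W j"
  shows "M = N"
proof -
  have "M * W = N * W"
  proof (rule mat_col_eqI)
    fix j assume "j < dim_col (N * W)"
    with W have j: "j < n" by simp
    show "col (M * W) j = col (N * W) j"
      using col_mult2[OF M W j] col_mult2[OF N W j] cols[OF j] by simp
  qed (use M N W in simp_all)
  then have "M * W * Wi = N * W * Wi" by simp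
  then show ?thesis
    using M N W Wi WWi right_mult_one_mat[OF M] right_mult_one_mat[OF N]
    by (simp add: assoc_mult_mat[of _ m n W n Wi n])
qed

lemma diag_unit_mat_sandwich_zero_iff:
  fixes Y :: "'a::comm_ring_1 mat"
  assumes Y: "Y \<in> carrier_mat n n" and "i < n" "j < n"
  shows "diag_unit_mat n i * Y * diag_unit_mat n j
      = 0\<^sub>m n n \<longleftrightarrow> Y $$ (i, j) = 0" (is "?M = _ \<longleftrightarrow> _")
proof -
  have M: "?M = mat n n (\<lambda>(r, c). if r = i \<and> c = j then Y $$ (i, j) else 0)"
    using Y by (auto simp: mat_diag_mult_left mat_diag_mult_right[of _ n n] intro!: eq_matI)
  show ?thesis
  proof
    assume "?M = 0\<^sub>m n n"
    then have "?M $$ (i, j) = 0" using assms(2,3) by simp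
    then show "Y $$ (i, j) = 0" using M assms(2,3) by simp
  qed (auto simp: M intro!: eq_matI)
qed

lemma mat_trace_diag_unit_mat_mult:
  fixes Y :: "'a::comm_ring_1 mat"
  assumes Y: "Y \<in> carrier_mat n n" and "i < n"
  shows "mat_trace (diag_unit_mat n i * Y) = Y $$ (i, i)"
proof -
  have "mat_trace (diag_unit_mat n i * Y)
      = (\<Sum>k<n. (if k = i then 1 else 0) * Y $$ (k, k))"
    using Y by (simp add: mat_diag_mult_left mat_trace_def)
  also have "\<dots> = Y $$ (i, i)"
    using assms(2) by (subst sum.remove[of _ i]) auto
  finally show ?thesis .
qed

section \<open>Eigenbases and primitive idempotents\<close>

lemma mult_vec_lin_comb_eigenvectors:
  assumes A: "A \<in> carrier_mat n n" and r: "r < n"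
    and ev: "\<And>j. j \<in> S \<Longrightarrow> eigenvector A (w j) (th j)"
  shows "(\<Sum>j\<in>S. c j * th j * w j $ r) = (\<Sum>m<n. A $$ (r, m) * (\<Sum>j\<in>S. c j * w j $ m))"
proof -
  have "th j * w j $ r = (\<Sum>m<n. A $$ (r, m) * w j $ m)" if "j \<in> S" for j
  proof -
    have wj: "w j \<in> carrier_vec n" using ev[OF that] A by (simp add: eigenvector_def)
    have "th j * w j $ r = (A *\<^sub>v w j) $ r"
      using ev[OF that] A r by (auto simp: eigenvector_def)
    also have "\<dots> = (\<Sum>m<n. A $$ (r, m) * w j $ m)"
      using wj A r by (auto simp: scalar_prod_def atLeast0LessThan intro!: sum.cong)
    finally show ?thesis .
  qed
  then have "(\<Sum>j\<in>S. c j * th j * w j $ r) = (\<Sum>j\<in>S. c j * (\<Sum>m<n. A $$ (r, m) * w j $ m))"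
    by (intro sum.cong) (auto simp: mult.assoc)
  also have "\<dots> = (\<Sum>m<n. A $$ (r, m) * (\<Sum>j\<in>S. c j * w j $ m))"
    unfolding sum_distrib_left by (subst sum.swap) (simp add: algebra_simps)
  finally show ?thesis .
qed

lemma eigenvectors_lin_indep:
  fixes A :: "'a::field mat"
  assumes A: "A \<in> carrier_mat n n" and "finite S"
    and "\<And>j. j \<in> S \<Longrightarrow> eigenvector A (w j) (th j)" and "inj_on th S"
    and "\<And>r. r < n \<Longrightarrow> (\<Sum>j\<in>S. c j * w j $ r) = 0"
  shows "\<forall>j\<in>S. c j = 0"
  using assms(2-)
proof (induction S arbitrary: c rule: finite_induct)
  case empty
  then show ?case by simp
next
  case (insert k S)
  \<comment> \<open>applying \<open>A - th k\<close> to the relation removes its \<open>k\<close>-th term\<close>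
  have shifted: "(\<Sum>j\<in>S. c j * (th j - th k) * w j $ r) = 0" if r: "r < n" for r
  proof -
    have "(\<Sum>m<n. A $$ (r, m) * (\<Sum>j\<in>insert k S. c j * w j $ m)) = 0"
      using insert.prems(3) by (intro sum.neutral) simp
    then have "(\<Sum>j\<in>insert k S. c j * th j * w j $ r) = 0"
      using mult_vec_lin_comb_eigenvectors[where S = "insert k S" and w = w and th = th and c = c,
          OF A r insert.prems(1)] by simp
    moreover have "(\<Sum>j\<in>S. c j * (th j - th k) * w j $ r)
        = (\<Sum>j\<in>insert k S. c j * th j * w j $ r) - th k * (\<Sum>j\<in>insert k S. c j * w j $ r)"
      using insert.hyps by (simp add: sum_distrib_left sum_subtractf algebra_simps)
    ultimately show ?thesis using insert.prems(3)[OF r] by simp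
  qed
  have "\<forall>j\<in>S. c j * (th j - th k) = 0"
    by (rule insert.IH) (use insert.prems shifted in auto)
  moreover have "th j \<noteq> th k" if "j \<in> S" for j
    using insert.prems(2) insert.hyps(2) that by (auto simp: inj_on_def)
  ultimately have cS: "\<forall>j\<in>S. c j = 0" by auto
  have wk: "w k \<in> carrier_vec n" "w k \<noteq> 0\<^sub>v n"
    using insert.prems(1)[of k] A by (auto simp: eigenvector_def)
  have "\<exists>r<n. w k $ r \<noteq> 0"
  proof (rule ccontr)
    assume "\<not> ?thesis"
    then have "w k = 0\<^sub>v n" using wk(1) by (intro eq_vecI) auto
    with wk(2) show False ..
  qed
  then obtain r where r: "r < n" "w k $ r \<noteq> 0" by blast
  have "c k * w k $ r = (\<Sum>j\<in>insert k S. c j * w j $ r)"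
    using insert.hyps cS by simp
  also have "\<dots> = 0" using insert.prems(3) r(1) .
  finally have "c k = 0" using r(2) by simp
  with cS show ?case by simp
qed

lemma det_mat_of_eigenvectors_neq_0:
  fixes A :: "'a::field mat"
  assumes A: "A \<in> carrier_mat n n"
    and ev: "\<And>j. j < n \<Longrightarrow> eigenvector A (w j) (th j)" and inj: "inj_on th {..<n}"
  shows "det (mat_of_cols n (map w [0..<n])) \<noteq> 0" (is "det ?W \<noteq> 0")
proof
  have W: "?W \<in> carrier_mat n n" using mat_of_cols_carrier(1)[of n "map w [0..<n]"] by simp
  assume "det ?W = 0"
  then obtain x where x: "x \<in> carrier_vec n" "x \<noteq> 0\<^sub>v n" "?W *\<^sub>v x = 0\<^sub>v n"
    using det_0_iff_vec_prod_zero[OF W] by blast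
  have comb: "(\<Sum>j<n. x $ j * w j $ r) = 0" if r: "r < n" for r
  proof -
    have "(\<Sum>j<n. x $ j * w j $ r) = (\<Sum>j<n. ?W $$ (r, j) * x $ j)"
      using r by (intro sum.cong) (simp_all add: mat_of_cols_index)
    also have "\<dots> = (?W *\<^sub>v x) $ r"
      using W x(1) r by (simp add: scalar_prod_def atLeast0LessThan)
    also have "\<dots> = 0" using x(3) r by simp
    finally show ?thesis .
  qed
  have "\<forall>j\<in>{..<n}. x $ j = 0"
    using eigenvectors_lin_indep[where S = "{..<n}" and w = w and th = th and c = "\<lambda>j. x $ j",
        OF A finite_lessThan] ev inj comb by blast
  then have "x = 0\<^sub>v n" using x(1) by (intro eq_vecI) auto
  with x(2) show False ..
qed

lemma primitive_idempotent_mult_eigenvector: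
  assumes "primitive_idempotent d A th i E" and "j \<le> d"
    and "u \<in> carrier_vec (d+1)" and "A *\<^sub>v u = th j \<cdot>\<^sub>v u"
  shows "E *\<^sub>v u = (if j = i then u else 0\<^sub>v (d+1))"
  using assms unfolding primitive_idempotent_def by auto

locale eigenbasis =
  fixes d :: nat and A :: "'a::field mat" and th :: "nat \<Rightarrow> 'a" and W Wi :: "'a mat"
  assumes A_carrier: "A \<in> carrier_mat (d+1) (d+1)"
    and W_carrier: "W \<in> carrier_mat (d+1) (d+1)" and Wi_carrier: "Wi \<in> carrier_mat (d+1) (d+1)"
    and W_mult_Wi: "W * Wi = 1\<^sub>m (d+1)"
    and eigenvector: "\<And>j. j \<le> d \<Longrightarrow> eigenvector A (col W j) (th j)"
begin

abbreviation w :: "nat \<Rightarrow> 'a vec" where "w j \<equiv> col W j"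

lemma dim_W [simp]: "dim_row W = d+1" "dim_col W = d+1"
  using W_carrier by auto

lemma w_carrier: "w j \<in> carrier_vec (d+1)"
  by (rule carrier_vecI) simp

lemma w_neq_0: "j \<le> d \<Longrightarrow> w j \<noteq> 0\<^sub>v (d+1)"
  and A_mult_w: "j \<le> d \<Longrightarrow> A *\<^sub>v w j = th j \<cdot>\<^sub>v w j"
  using eigenvector A_carrier unfolding eigenvector_def by auto

lemma mat_eq_on_eigenvectors:
  assumes "M \<in> carrier_mat m (d+1)" "N \<in> carrier_mat m (d+1)"
    and "\<And>j. j \<le> d \<Longrightarrow> M *\<^sub>v w j = N *\<^sub>v w j"
  shows "M = N"
  by (rule mat_eq_on_invertible_cols[OF W_carrier Wi_carrier W_mult_Wi assms(1,2)])
    (use assms(3) in auto)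

lemma primitive_idempotent_mult_w:
  assumes "primitive_idempotent d A th i E" and "j \<le> d"
  shows "E *\<^sub>v w j = (if j = i then w j else 0\<^sub>v (d+1))"
  using primitive_idempotent_mult_eigenvector[OF assms w_carrier A_mult_w[OF assms(2)]] .

lemma primitive_idempotent_neq_0:
  assumes "primitive_idempotent d A th i E" "i \<le> d"
  shows "E \<noteq> 0\<^sub>m (d+1) (d+1)"
  using primitive_idempotent_mult_w[OF assms] w_neq_0[OF assms(2)] w_carrier by auto

lemma primitive_idempotents_distinct:
  assumes "primitive_idempotent d A th i Ei" "primitive_idempotent d A th j Ej"
    and "j \<le> d" and "i \<noteq> j"
  shows "Ei \<noteq> Ej"
  using primitive_idempotent_mult_w[OF assms(1,3)] primitive_idempotent_mult_w[OF assms(2,3)]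
    w_neq_0[OF assms(3)] assms(4) by auto

lemma primitive_idempotent_mult_A:
  assumes E: "primitive_idempotent d A th i E"
  shows "E * A = th i \<cdot>\<^sub>m E"
proof (rule mat_eq_on_eigenvectors)
  have E_carrier: "E \<in> carrier_mat (d+1) (d+1)" using E by (simp add: primitive_idempotent_def)
  then show "E * A \<in> carrier_mat (d+1) (d+1)" "th i \<cdot>\<^sub>m E \<in> carrier_mat (d+1) (d+1)"
    using A_carrier by auto
  fix j assume j: "j \<le> d"
  have "E * A *\<^sub>v w j = th j \<cdot>\<^sub>v (E *\<^sub>v w j)"
    using E_carrier A_carrier w_carrier by (simp add: A_mult_w[OF j] mult_mat_vec)
  also have "\<dots> = th i \<cdot>\<^sub>v (E *\<^sub>v w j)"
    using primitive_idempotent_mult_w[OF E j] by auto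
  also have "\<dots> = (th i \<cdot>\<^sub>m E) *\<^sub>v w j"
    using smult_mat_mult_vec[OF E_carrier w_carrier] by simp
  finally show "E * A *\<^sub>v w j = (th i \<cdot>\<^sub>m E) *\<^sub>v w j" .
qed

lemma primitive_idempotent_mult_vec_coord:
  assumes E: "primitive_idempotent d A th i E" and i: "i \<le> d" and u: "u \<in> carrier_vec (d+1)"
  shows "E *\<^sub>v u = (Wi *\<^sub>v u) $ i \<cdot>\<^sub>v w i"
proof -
  define x where "x = Wi *\<^sub>v u"
  have x: "x \<in> carrier_vec (d+1)" using Wi_carrier u by (simp add: x_def)
  have E_carrier: "E \<in> carrier_mat (d+1) (d+1)" using E by (simp add: primitive_idempotent_def)
  have "u = W *\<^sub>v x"
    using assoc_mult_mat_vec[OF W_carrier Wi_carrier u] W_mult_Wi u by (simp add: x_def)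
  then have "E *\<^sub>v u = (E * W) *\<^sub>v x"
    using E_carrier W_carrier x by simp
  also have "E * W = W * diag_unit_mat (d+1) i"
    by (rule mult_eq_mult_mat_diagI[OF E_carrier W_carrier])
      (use primitive_idempotent_mult_w[OF E] w_carrier in auto)
  also have "\<dots> *\<^sub>v x = x $ i \<cdot>\<^sub>v w i"
  proof (rule eq_vecI)
    fix r assume "r < dim_vec (x $ i \<cdot>\<^sub>v w i)"
    then have r: "r < d+1" using W_carrier by simp
    have "(W * diag_unit_mat (d+1) i *\<^sub>v x) $ r
        = (\<Sum>k<d+1. (W $$ (r, k) * (if k = i then 1 else 0)) * x $ k)"
      using W_carrier r x by (simp add: mat_diag_mult_right scalar_prod_def atLeast0LessThan)
    also have "\<dots> = W $$ (r, i) * x $ i"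
      using i by (subst sum.remove[of _ i]) auto
    also have "\<dots> = (x $ i \<cdot>\<^sub>v w i) $ r"
      using r i W_carrier by (simp add: mult.commute)
    finally show "(W * diag_unit_mat (d+1) i *\<^sub>v x) $ r = (x $ i \<cdot>\<^sub>v w i) $ r" .
  qed (use W_carrier x in simp)
  finally show ?thesis unfolding x_def .
qed

lemma primitive_idempotent_mult_adjacent_on_w:
  assumes E: "\<And>j. j \<le> d \<Longrightarrow> primitive_idempotent d A th j (E j)"
    and i: "i \<le> d" and j: "j \<le> d" and B: "B \<in> carrier_mat (d+1) (d+1)"
    and others: "\<And>j. j \<le> d \<Longrightarrow> j \<noteq> i \<Longrightarrow> j \<noteq> k \<Longrightarrow> E i * B * E j = 0\<^sub>m (d+1) (d+1)"
  shows "E i * B * A *\<^sub>v w j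
    = (th k \<cdot>\<^sub>m (E i * B) + ((th i - th k) * (Wi *\<^sub>v (B *\<^sub>v w i)) $ i) \<cdot>\<^sub>m E i) *\<^sub>v w j"
proof -
  have E_carrier: "E j \<in> carrier_mat (d+1) (d+1)" if "j \<le> d" for j
    using E[OF that] by (simp add: primitive_idempotent_def)
  have EB: "E i * B \<in> carrier_mat (d+1) (d+1)" using E_carrier[OF i] B by simp
  \<comment> \<open>the range of \<open>E i\<close> is spanned by \<open>w i\<close>; \<open>c\<close> is \<open>th i - th k\<close> times the coordinate of \<open>E i B w i\<close>\<close>
  define c where "c = (th i - th k) * (Wi *\<^sub>v (B *\<^sub>v w i)) $ i"
  let ?z = "E i *\<^sub>v (B *\<^sub>v w j)"
  have EBw: "(E i * B) *\<^sub>v w j = ?z"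
    using E_carrier[OF i] B w_carrier by simp
  have z: "?z \<in> carrier_vec (d+1)"
    using EB w_carrier unfolding EBw[symmetric] by (rule mult_mat_vec_carrier)
  have lhs: "E i * B * A *\<^sub>v w j = th j \<cdot>\<^sub>v ?z"
    using assoc_mult_mat_vec[OF EB A_carrier w_carrier] mult_mat_vec[OF EB w_carrier]
    by (simp add: A_mult_w[OF j] EBw)
  have rhs: "(th k \<cdot>\<^sub>m (E i * B) + c \<cdot>\<^sub>m E i) *\<^sub>v w j = th k \<cdot>\<^sub>v ?z + c \<cdot>\<^sub>v (E i *\<^sub>v w j)"
    using add_mult_distrib_mat_vec[OF smult_carrier_mat[OF EB] smult_carrier_mat[OF E_carrier[OF i]] w_carrier]
      smult_mat_mult_vec[OF EB w_carrier] smult_mat_mult_vec[OF E_carrier[OF i] w_carrier]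
    by (simp add: EBw)
  have "th j \<cdot>\<^sub>v ?z = th k \<cdot>\<^sub>v ?z + c \<cdot>\<^sub>v (E i *\<^sub>v w j)"
  proof (cases "j = i")
    case True
    have "?z = (Wi *\<^sub>v (B *\<^sub>v w i)) $ i \<cdot>\<^sub>v w i"
      using primitive_idempotent_mult_vec_coord[OF E[OF i] i] B w_carrier True
      by (simp add: mult_mat_vec_carrier)
    with True show ?thesis
      using primitive_idempotent_mult_w[OF E[OF i] i] w_carrier
      by (auto simp: c_def algebra_simps intro!: eq_vecI)
  next
    case False
    have Eiw: "E i *\<^sub>v w j = 0\<^sub>v (d+1)"
      using primitive_idempotent_mult_w[OF E[OF i] j] False by simp
    have "th j \<cdot>\<^sub>v ?z = th k \<cdot>\<^sub>v ?z"
    proof (cases "j = k")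
      case False
      have "?z = (E i * B * E j) *\<^sub>v w j"
        using EB E_carrier[OF j] w_carrier primitive_idempotent_mult_w[OF E[OF j] j]
        by (simp add: EBw)
      also have "\<dots> = 0\<^sub>v (d+1)"
        using others[OF j \<open>j \<noteq> i\<close> False] w_carrier by simp
      finally show ?thesis by simp
    qed simp
    then show ?thesis using z Eiw by simp
  qed
  then show ?thesis using lhs rhs by (simp add: c_def)
qed

lemma primitive_idempotent_mult_adjacent:
  assumes E: "\<And>j. j \<le> d \<Longrightarrow> primitive_idempotent d A th j (E j)"
    and i: "i \<le> d" and B: "B \<in> carrier_mat (d+1) (d+1)"
    and others: "\<And>j. j \<le> d \<Longrightarrow> j \<noteq> i \<Longrightarrow> j \<noteq> k \<Longrightarrow> E i * B * E j = 0\<^sub>m (d+1) (d+1)"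
  obtains c where "E i * B * A = th k \<cdot>\<^sub>m (E i * B) + c \<cdot>\<^sub>m E i"
proof
  have "E i \<in> carrier_mat (d+1) (d+1)" using E[OF i] by (simp add: primitive_idempotent_def)
  with B A_carrier show "E i * B * A
      = th k \<cdot>\<^sub>m (E i * B) + ((th i - th k) * (Wi *\<^sub>v (B *\<^sub>v w i)) $ i) \<cdot>\<^sub>m E i"
    by (intro mat_eq_on_eigenvectors primitive_idempotent_mult_adjacent_on_w[OF E i _ B others]) auto
qed

lemma Delta_adj_single_neighbour:
  assumes E: "\<And>j. j \<le> d \<Longrightarrow> primitive_idempotent d A th j (E j)"
    and i: "i \<le> d" and B: "B \<in> carrier_mat (d+1) (d+1)"
    and nonadj: "\<forall>j\<le>d. j \<noteq> k \<longrightarrow> \<not> Delta_adj d E B i j"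
  obtains c where "E i * B * A = th k \<cdot>\<^sub>m (E i * B) + c \<cdot>\<^sub>m E i"
proof -
  have "E i * B * E j = 0\<^sub>m (d+1) (d+1)" if "j \<le> d" "j \<noteq> i" "j \<noteq> k" for j
    using nonadj primitive_idempotents_distinct[OF E[OF i] E[OF that(1)]] that
    unfolding Delta_adj_def by auto
  from primitive_idempotent_mult_adjacent[OF E i B this] that show ?thesis by blast
qed

end

lemma multiplicity_free_eigenbasis:
  fixes A :: "'a::field mat"
  assumes A: "A \<in> carrier_mat (d+1) (d+1)" and mf: "multiplicity_free d A th"
  obtains W Wi where "eigenbasis d A th W Wi"
proof -
  have "\<forall>j. \<exists>u. j \<le> d \<longrightarrow> eigenvector A u (th j)"
    using mf unfolding multiplicity_free_def eigenvalue_def by blast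
  then obtain w where ev: "\<And>j. j \<le> d \<Longrightarrow> eigenvector A (w j) (th j)"
    by (metis choice)
  define W where "W = mat_of_cols (d+1) (map w [0..<d+1])"
  have W: "W \<in> carrier_mat (d+1) (d+1)"
    using mat_of_cols_carrier(1)[of "d+1" "map w [0..<d+1]"] by (simp add: W_def)
  have col_W: "col W j = w j" if "j \<le> d" for j
    using ev[OF that] A that by (simp add: W_def eigenvector_def del: upt_Suc)
  have "det W \<noteq> 0"
    unfolding W_def by (rule det_mat_of_eigenvectors_neq_0[OF A])
      (use ev mf in \<open>auto simp: multiplicity_free_def lessThan_Suc_atMost atLeast0AtMost\<close>)
  then obtain Wi where "Wi \<in> carrier_mat (d+1) (d+1)" "W * Wi = 1\<^sub>m (d+1)"
    using det_non_zero_imp_unit[OF W] unfolding Units_def ring_mat_def by auto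
  with A W ev col_W show ?thesis by (intro that) (unfold_locales, auto)
qed
section \<open>Coordinates in a basis adapted to the idempotents\<close>

lemma dual_mat_carrier: "dual_mat d ths Es \<in> carrier_mat (d+1) (d+1)"
  by (simp add: dual_mat_def)

locale adapted_basis =
  fixes d :: nat and Es :: "nat \<Rightarrow> 'a::field mat" and P Q :: "'a mat"
  assumes idempotents: "mo_idempotents d Es"
    and P_carrier: "P \<in> carrier_mat (d+1) (d+1)" and Q_carrier: "Q \<in> carrier_mat (d+1) (d+1)"
    and P_mult_Q: "P * Q = 1\<^sub>m (d+1)" and Q_mult_P: "Q * P = 1\<^sub>m (d+1)"
    and adapted: "\<And>j. j \<le> d \<Longrightarrow> \<exists>u \<in> carrier_vec (d+1). col P j = Es j *\<^sub>v u"
begin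

abbreviation v :: "nat \<Rightarrow> 'a vec" where "v j \<equiv> col P j"

lemma dim_P [simp]: "dim_row P = d+1" "dim_col P = d+1"
  using P_carrier by auto

lemma v_carrier: "v j \<in> carrier_vec (d+1)"
  by (rule carrier_vecI) simp

lemma Es_carrier: "i \<le> d \<Longrightarrow> Es i \<in> carrier_mat (d+1) (d+1)"
  and Es_mult_Es: "i \<le> d \<Longrightarrow> j \<le> d \<Longrightarrow> Es i * Es j = (if i = j then Es i else 0\<^sub>m (d+1) (d+1))"
  using idempotents unfolding mo_idempotents_def by auto

lemma Es_mult_v:
  assumes i: "i \<le> d" and j: "j \<le> d"
  shows "Es i *\<^sub>v v j = (if i = j then v j else 0\<^sub>v (d+1))"
proof -
  obtain u where u: "u \<in> carrier_vec (d+1)" "v j = Es j *\<^sub>v u"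
    using adapted[OF j] by blast
  then have "Es i *\<^sub>v v j = (Es i * Es j) *\<^sub>v u"
    using Es_carrier[OF i] Es_carrier[OF j] by simp
  then show ?thesis using u Es_mult_Es[OF i j] by auto
qed

lemma Es_mult_P: "i \<le> d \<Longrightarrow> Es i * P = P * diag_unit_mat (d+1) i"
  by (rule mult_eq_mult_mat_diagI[OF Es_carrier P_carrier]) (auto simp: Es_mult_v)

lemma dual_mat_mult_v:
  assumes j: "j \<le> d"
  shows "dual_mat d ths Es *\<^sub>v v j = ths j \<cdot>\<^sub>v v j"
proof (rule eq_vecI)
  fix r assume "r < dim_vec (ths j \<cdot>\<^sub>v v j)"
  then have r: "r < d+1" using P_carrier by simp
  have Es_v: "(Es i *\<^sub>v v j) $ r = (\<Sum>c<d+1. Es i $$ (r, c) * v j $ c)" if "i \<le> d" for i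
    using Es_carrier[OF that] P_carrier r by (simp add: scalar_prod_def atLeast0LessThan)
  have "(dual_mat d ths Es *\<^sub>v v j) $ r = (\<Sum>c<d+1. (\<Sum>i\<le>d. ths i * Es i $$ (r, c)) * v j $ c)"
    using P_carrier r by (simp add: dual_mat_def scalar_prod_def atLeast0LessThan)
  also have "\<dots> = (\<Sum>i\<le>d. ths i * (\<Sum>c<d+1. Es i $$ (r, c) * v j $ c))"
    unfolding sum_distrib_left sum_distrib_right by (subst sum.swap) (simp add: mult.assoc)
  also have "\<dots> = (\<Sum>i\<le>d. ths i * (Es i *\<^sub>v v j) $ r)"
    using Es_v by simp
  also have "\<dots> = ths j * (Es j *\<^sub>v v j) $ r"
    by (rule sum_eq_single) (use j r in \<open>auto simp: Es_mult_v\<close>)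
  also have "\<dots> = (ths j \<cdot>\<^sub>v v j) $ r"
    using r j P_carrier by (simp add: Es_mult_v)
  finally show "(dual_mat d ths Es *\<^sub>v v j) $ r = (ths j \<cdot>\<^sub>v v j) $ r" .
qed (use P_carrier in \<open>simp add: dual_mat_def\<close>)

lemma dual_mat_mult_P: "dual_mat d ths Es * P = P * mat_diag (d+1) ths"
  by (rule mult_eq_mult_mat_diagI[OF dual_mat_carrier P_carrier]) (auto simp: dual_mat_mult_v)

context
  fixes A Y :: "'a mat"
  assumes A: "A \<in> carrier_mat (d+1) (d+1)" and Y: "Y \<in> carrier_mat (d+1) (d+1)"
    and AP: "A * P = P * Y"
begin

lemma Es_mult_A_mult_P:
  assumes i: "i \<le> d"
  shows "Es i * A * P = P * (diag_unit_mat (d+1) i * Y)"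
proof -
  have "Es i * A * P = Es i * (A * P)"
    by (rule assoc_mult_mat[OF Es_carrier[OF i] A P_carrier])
  also have "\<dots> = Es i * P * Y"
    unfolding AP by (rule assoc_mult_mat[OF Es_carrier[OF i] P_carrier Y, symmetric])
  also have "\<dots> = P * (diag_unit_mat (d+1) i * Y)"
    unfolding Es_mult_P[OF i] by (rule assoc_mult_mat[OF P_carrier mat_diag_dim Y])
  finally show ?thesis .
qed

lemma Es_A_Es_zero_iff:
  assumes i: "i \<le> d" and j: "j \<le> d"
  shows "Es i * A * Es j = 0\<^sub>m (d+1) (d+1) \<longleftrightarrow> Y $$ (i, j) = 0"
proof -
  let ?D = "\<lambda>i. diag_unit_mat (d+1) i :: 'a mat"
  have EA: "Es i * A \<in> carrier_mat (d+1) (d+1)" using Es_carrier[OF i] A by simp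
  have "Es i * A * Es j * P = Es i * A * (P * ?D j)"
    unfolding Es_mult_P[OF j, symmetric] by (rule assoc_mult_mat[OF EA Es_carrier[OF j] P_carrier])
  also have "\<dots> = P * (?D i * Y) * ?D j"
    unfolding Es_mult_A_mult_P[OF i, symmetric] by (rule assoc_mult_mat[OF EA P_carrier mat_diag_dim, symmetric])
  also have "\<dots> = P * (?D i * Y * ?D j)"
    by (rule assoc_mult_mat[OF P_carrier mult_carrier_mat[OF mat_diag_dim Y] mat_diag_dim])
  finally have "similar_mat_wit (Es i * A * Es j) (?D i * Y * ?D j) P Q"
    using Es_carrier[OF i] Es_carrier[OF j] A P_carrier Q_carrier P_mult_Q Q_mult_P
      mult_carrier_mat[OF mult_carrier_mat[OF mat_diag_dim Y] mat_diag_dim]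
    by (intro similar_mat_witI_mult) auto
  then have "Es i * A * Es j = 0\<^sub>m (d+1) (d+1) \<longleftrightarrow> ?D i * Y * ?D j = 0\<^sub>m (d+1) (d+1)"
    using EA Es_carrier[OF j] by (intro similar_mat_wit_zero_iff) auto
  also have "\<dots> \<longleftrightarrow> Y $$ (i, j) = 0"
    using diag_unit_mat_sandwich_zero_iff[OF Y, of i j] i j by simp
  finally show ?thesis .
qed

lemma mat_trace_Es_mult:
  assumes i: "i \<le> d"
  shows "mat_trace (Es i * A) = Y $$ (i, i)"
proof -
  have "similar_mat_wit (Es i * A) (diag_unit_mat (d+1) i * Y) P Q"
    using Es_carrier[OF i] A P_carrier Q_carrier mult_carrier_mat[OF mat_diag_dim Y]
      P_mult_Q Q_mult_P Es_mult_A_mult_P[OF i]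
    by (intro similar_mat_witI_mult) auto
  then have "mat_trace (Es i * A) = mat_trace (diag_unit_mat (d+1) i * Y)"
    using Es_carrier[OF i] A by (intro similar_mat_wit_mat_trace) auto
  also have "\<dots> = Y $$ (i, i)"
    using mat_trace_diag_unit_mat_mult[OF Y, of i] i by simp
  finally show ?thesis .
qed

end

end

lemma normalizing_adapted_basis:
  assumes Es: "mo_idempotents d Es" and norm: "normalizing d Es A \<theta>"
  obtains P Q Y where "adapted_basis d Es P Q" and "Y \<in> carrier_mat (d+1) (d+1)"
    and "A * P = P * Y" and "\<forall>i\<le>d. (\<Sum>j\<le>d. Y $$ (i, j)) = \<theta>"
proof -
  obtain v Y where v: "\<forall>i\<le>d. v i \<in> carrier_vec (d+1) \<and> (\<exists>u \<in> carrier_vec (d+1). v i = Es i *\<^sub>v u)"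
    and P_inv: "invertible_mat (mat_of_cols (d+1) (map v [0..<d+1]))"
    and Y: "Y \<in> carrier_mat (d+1) (d+1)"
    and AP: "A * mat_of_cols (d+1) (map v [0..<d+1]) = mat_of_cols (d+1) (map v [0..<d+1]) * Y"
    and rows: "\<forall>i\<le>d. (\<Sum>j\<le>d. Y $$ (i, j)) = \<theta>"
    using norm unfolding normalizing_def by blast
  define P where "P = mat_of_cols (d+1) (map v [0..<d+1])"
  have P: "P \<in> carrier_mat (d+1) (d+1)"
    using mat_of_cols_carrier(1)[of "d+1" "map v [0..<d+1]"] by (simp add: P_def)
  obtain Q where "Q \<in> carrier_mat (d+1) (d+1)" "P * Q = 1\<^sub>m (d+1)" "Q * P = 1\<^sub>m (d+1)"
    using invertible_matE[OF P_inv[folded P_def] P] .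
  moreover have "col P j = v j" if "j \<le> d" for j
    using v that by (simp add: P_def del: upt_Suc)
  ultimately have "adapted_basis d Es P Q"
    using Es P v by unfold_locales auto
  with Y AP rows show ?thesis by (intro that) (simp_all add: P_def)
qed

lemma row_of_left_eigen_mat:
  fixes F :: "'a::comm_ring_1 mat"
  assumes F: "F \<in> carrier_mat n n" and Y: "Y \<in> carrier_mat n n" and F0: "F \<noteq> 0\<^sub>m n n"
    and FY: "F * Y = \<theta> \<cdot>\<^sub>m F"
    and FDY: "F * mat_diag n ths * Y = \<theta>' \<cdot>\<^sub>m (F * mat_diag n ths) + c \<cdot>\<^sub>m F"
  obtains f k where "k < n" "f k \<noteq> 0"
    and "\<And>j. j < n \<Longrightarrow> (\<Sum>i<n. f i * Y $$ (i, j)) = \<theta> * f j"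
    and "\<And>j. j < n \<Longrightarrow> (\<Sum>i<n. f i * ths i * Y $$ (i, j)) = \<theta>' * (f j * ths j) + c * f j"
proof -
  have "\<exists>r<n. \<exists>k<n. F $$ (r, k) \<noteq> 0"
    using F F0 by (auto intro!: eq_matI)
  then obtain r k where r: "r < n" and k: "k < n" and Frk: "F $$ (r, k) \<noteq> 0"
    by blast
  show ?thesis
  proof (rule that[of k "\<lambda>i. F $$ (r, i)"])
    fix j assume j: "j < n"
    show "(\<Sum>i<n. F $$ (r, i) * Y $$ (i, j)) = \<theta> * F $$ (r, j)"
      using arg_cong[OF FY, of "\<lambda>M. M $$ (r, j)"] F Y r j
      by (simp add: scalar_prod_def atLeast0LessThan)
    show "(\<Sum>i<n. F $$ (r, i) * ths i * Y $$ (i, j)) = \<theta>' * (F $$ (r, j) * ths j) + c * F $$ (r, j)"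
      using arg_cong[OF FDY, of "\<lambda>M. M $$ (r, j)"] F Y r j
      by (simp add: scalar_prod_def atLeast0LessThan mat_diag_mult_right)
  qed (use k Frk in auto)
qed

lemma left_eigenvector_in_basis:
  fixes G :: "'a::field mat"
  assumes G: "G \<in> carrier_mat n n" and A: "A \<in> carrier_mat n n" and B: "B \<in> carrier_mat n n"
    and P: "P \<in> carrier_mat n n" and Q: "Q \<in> carrier_mat n n" and Y: "Y \<in> carrier_mat n n"
    and PQ: "P * Q = 1\<^sub>m n" and G0: "G \<noteq> 0\<^sub>m n n"
    and GA: "G * A = \<theta> \<cdot>\<^sub>m G" and GBA: "G * B * A = \<theta>' \<cdot>\<^sub>m (G * B) + c \<cdot>\<^sub>m G"
    and AP: "A * P = P * Y" and BP: "B * P = P * mat_diag n ths"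
  obtains f k where "k < n" "f k \<noteq> 0"
    and "\<And>j. j < n \<Longrightarrow> (\<Sum>i<n. f i * Y $$ (i, j)) = \<theta> * f j"
    and "\<And>j. j < n \<Longrightarrow> (\<Sum>i<n. f i * ths i * Y $$ (i, j)) = \<theta>' * (f j * ths j) + c * f j"
proof -
  let ?D = "mat_diag n ths"
  note assoc = assoc_mult_mat[of _ n n _ n _ n]
  define F where "F = G * P"
  have F: "F \<in> carrier_mat n n" using G P by (simp add: F_def)
  have FY: "F * Y = \<theta> \<cdot>\<^sub>m F"
  proof -
    have "F * Y = G * A * P" using G A P Y by (simp add: F_def assoc AP)
    also have "\<dots> = \<theta> \<cdot>\<^sub>m F" using G P by (simp add: GA F_def mult_smult_assoc_mat)
    finally show ?thesis .
  qed
  have FDY: "F * ?D * Y = \<theta>' \<cdot>\<^sub>m (F * ?D) + c \<cdot>\<^sub>m F"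
  proof -
    have "F * ?D * Y = G * B * A * P" using G A B P Y by (simp add: F_def assoc AP BP[symmetric])
    also have "\<dots> = \<theta>' \<cdot>\<^sub>m (G * B * P) + c \<cdot>\<^sub>m F"
      unfolding GBA F_def using G B P
      by (simp add: add_mult_distrib_mat[of _ n n _ _ n] mult_smult_assoc_mat[of _ n n P n])
    also have "G * B * P = F * ?D" using G B P by (simp add: F_def assoc BP)
    finally show ?thesis .
  qed
  have "F \<noteq> 0\<^sub>m n n"
  proof
    assume "F = 0\<^sub>m n n"
    then have "G * (P * Q) = 0\<^sub>m n n" using G P Q by (simp add: F_def assoc[symmetric])
    with G0 G show False by (simp add: PQ)
  qed
  then show ?thesis by (rule row_of_left_eigen_mat[OF F Y _ FY FDY that])
qed

section \<open>Left eigenvectors of irreducible tridiagonal matrices\<close>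

definition irreducible_tridiagonal :: "nat \<Rightarrow> 'a::zero mat \<Rightarrow> bool" where
  "irreducible_tridiagonal d Y \<longleftrightarrow>
     (\<forall>i\<le>d. \<forall>j\<le>d. (i > j + 1 \<or> j > i + 1) \<longrightarrow> Y $$ (i, j) = 0) \<and>
     (\<forall>i\<le>d. \<forall>j\<le>d. (i = j + 1 \<or> j = i + 1) \<longrightarrow> Y $$ (i, j) \<noteq> 0)"

lemma irreducible_tridiagonal_zero:
  "irreducible_tridiagonal d Y \<Longrightarrow> i \<le> d \<Longrightarrow> j \<le> d \<Longrightarrow> i > j + 1 \<or> j > i + 1 \<Longrightarrow> Y $$ (i, j) = 0"
  and irreducible_tridiagonal_nonzero:
  "irreducible_tridiagonal d Y \<Longrightarrow> i \<le> d \<Longrightarrow> j \<le> d \<Longrightarrow> i = j + 1 \<or> j = i + 1 \<Longrightarrow> Y $$ (i, j) \<noteq> 0"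
  unfolding irreducible_tridiagonal_def by blast+

context
  fixes d :: nat and Y :: "'a::field mat" and f :: "nat \<Rightarrow> 'a" and \<theta> :: 'a
  assumes Y: "irreducible_tridiagonal d Y"
    and eig: "\<And>j. j \<le> d \<Longrightarrow> (\<Sum>i\<le>d. f i * Y $$ (i, j)) = \<theta> * f j"
begin

lemma left_eigenvector_zero_if_first_zero:
  assumes "f 0 = 0" and "i \<le> d"
  shows "f i = 0"
proof -
  have "\<forall>i\<le>m. f i = 0" if "m \<le> d" for m
    using that
  proof (induction m)
    case 0
    then show ?case using \<open>f 0 = 0\<close> by simp
  next
    case (Suc m)
    then have IH: "\<forall>i\<le>m. f i = 0" by simp
    have "f i * Y $$ (i, m) = 0" if "i \<le> d" "i \<noteq> Suc m" for i
      using IH irreducible_tridiagonal_zero[OF Y that(1), of m] that Suc.prems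
      by (cases "i \<le> m") auto
    then have "f (Suc m) * Y $$ (Suc m, m) = (\<Sum>i\<le>d. f i * Y $$ (i, m))"
      using Suc.prems by (intro sum_eq_single[symmetric]) auto
    also have "\<dots> = 0" using eig[of m] IH Suc.prems by simp
    finally have "f (Suc m) = 0"
      using irreducible_tridiagonal_nonzero[OF Y, of "Suc m" m] Suc.prems by simp
    with IH show ?case by (auto simp: le_Suc_eq)
  qed
  then show ?thesis using assms(2) by blast
qed

lemma left_eigenvector_zero_if_last_zero:
  assumes "f d = 0" and "i \<le> d"
  shows "f i = 0"
proof -
  have "\<forall>i. m \<le> i \<and> i \<le> d \<longrightarrow> f i = 0" if "m \<le> d" for m
    using that
  proof (induction m rule: inc_induct)
    case base
    then show ?case using \<open>f d = 0\<close> by auto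
  next
    case (step m)
    then have IH: "\<forall>i. Suc m \<le> i \<and> i \<le> d \<longrightarrow> f i = 0" by simp
    have "f i * Y $$ (i, Suc m) = 0" if "i \<le> d" "i \<noteq> m" for i
      using IH irreducible_tridiagonal_zero[OF Y that(1), of "Suc m"] that step.hyps
      by (cases "Suc m \<le> i") auto
    then have "f m * Y $$ (m, Suc m) = (\<Sum>i\<le>d. f i * Y $$ (i, Suc m))"
      using step.hyps by (intro sum_eq_single[symmetric]) auto
    also have "\<dots> = 0" using eig[of "Suc m"] IH step.hyps by simp
    finally have "f m = 0"
      using irreducible_tridiagonal_nonzero[OF Y, of m "Suc m"] step.hyps by simp
    show ?case
    proof (intro allI impI)
      fix i assume "m \<le> i \<and> i \<le> d"
      then consider "i = m" | "Suc m \<le> i \<and> i \<le> d" by linarith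
      then show "f i = 0" using IH \<open>f m = 0\<close> by cases auto
    qed
  qed
  then show ?thesis using assms(2) by blast
qed

end

lemma column_single_entry_relation:
  fixes f ths :: "nat \<Rightarrow> 'a::field"
  assumes col: "\<And>i. i \<le> d \<Longrightarrow> i \<noteq> k \<Longrightarrow> Y $$ (i, j) = 0" and k: "k \<le> d" and fj: "f j \<noteq> 0"
    and eig: "(\<Sum>i\<le>d. f i * Y $$ (i, j)) = \<theta> * f j"
    and eig': "(\<Sum>i\<le>d. f i * ths i * Y $$ (i, j)) = \<theta>' * (f j * ths j) + c * f j"
  shows "\<theta> * ths k = \<theta>' * ths j + c"
proof -
  have "(\<Sum>i\<le>d. f i * Y $$ (i, j)) = f k * Y $$ (k, j)"
    by (rule sum_eq_single) (use k col in auto)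
  with eig have col_eq: "\<theta> * f j = f k * Y $$ (k, j)" by simp
  have "(\<Sum>i\<le>d. f i * ths i * Y $$ (i, j)) = f k * ths k * Y $$ (k, j)"
    by (rule sum_eq_single) (use k col in auto)
  with eig' have col_eq': "f k * ths k * Y $$ (k, j) = \<theta>' * (f j * ths j) + c * f j" by simp
  have "f j * (\<theta> * ths k) = ths k * (\<theta> * f j)" by (simp add: algebra_simps)
  also have "\<dots> = f k * ths k * Y $$ (k, j)" unfolding col_eq by (simp add: algebra_simps)
  also have "\<dots> = f j * (\<theta>' * ths j + c)" unfolding col_eq' by (simp add: algebra_simps)
  finally show ?thesis using fj by simp
qed

lemma irreducible_tridiagonal_end_relations:
  fixes Y :: "'a::field mat"
  assumes Y: "irreducible_tridiagonal d Y" and diag: "\<And>i. i \<le> d \<Longrightarrow> Y $$ (i, i) = 0"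
    and d: "1 \<le> d" and k: "k \<le> d" "f k \<noteq> 0"
    and eig: "\<And>j. j \<le> d \<Longrightarrow> (\<Sum>i\<le>d. f i * Y $$ (i, j)) = \<theta> * f j"
    and eig': "\<And>j. j \<le> d \<Longrightarrow> (\<Sum>i\<le>d. f i * ths i * Y $$ (i, j)) = \<theta>' * (f j * ths j) + c * f j"
  shows "\<theta> * ths 1 = \<theta>' * ths 0 + c" and "\<theta> * ths (d - 1) = \<theta>' * ths d + c"
proof -
  have first_col: "Y $$ (i, 0) = 0" if "i \<le> d" "i \<noteq> 1" for i
    using diag[of 0] irreducible_tridiagonal_zero[OF Y that(1), of 0] that by (cases "i = 0") auto
  have "f 0 \<noteq> 0" using left_eigenvector_zero_if_first_zero[OF Y eig _ k(1)] k(2) by blast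
  then show "\<theta> * ths 1 = \<theta>' * ths 0 + c"
    using column_single_entry_relation[OF first_col _ _ eig[of 0] eig'[of 0]] d by simp
  have last_col: "Y $$ (i, d) = 0" if "i \<le> d" "i \<noteq> d - 1" for i
    using diag[of d] irreducible_tridiagonal_zero[OF Y that(1), of d] that by (cases "i = d") auto
  have "f d \<noteq> 0" using left_eigenvector_zero_if_last_zero[OF Y eig _ k(1)] k(2) by blast
  then show "\<theta> * ths (d - 1) = \<theta>' * ths d + c"
    using column_single_entry_relation[OF last_col _ _ eig[of d] eig'[of d]] d by simp
qed

lemma irreducible_tridiagonal_first_row_sum:
  assumes Y: "irreducible_tridiagonal d Y" and diag: "Y $$ (0, 0) = 0" and d: "1 \<le> d"
  shows "(\<Sum>j\<le>d. Y $$ (0, j)) = Y $$ (0, 1)"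
proof (rule sum_eq_single)
  fix j assume "j \<in> {..d}" "j \<noteq> 1"
  then show "Y $$ (0, j) = 0"
    using diag irreducible_tridiagonal_zero[OF Y _ _, of 0 j] by (cases "j = 0") auto
qed (use d in auto)

theorem corollary7p5:
  fixes d :: nat
    and Es E :: "nat \<Rightarrow> 'a::field mat"
    and A :: "'a mat"
    and th ths :: "nat \<Rightarrow> 'a"
  assumes d3: "d \<ge> 3"
    and Es: "mo_idempotents d Es"
    and A: "A \<in> carrier_mat (d+1) (d+1)"
    and tri0: "\<forall>i\<le>d. \<forall>j\<le>d. (i > j + 1 \<or> j > i + 1) \<longrightarrow> Es i * A * Es j = 0\<^sub>m (d+1) (d+1)"
    and tri1: "\<forall>i\<le>d. \<forall>j\<le>d. (i = j + 1 \<or> j = i + 1) \<longrightarrow> Es i * A * Es j \<noteq> 0\<^sub>m (d+1) (d+1)"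
    and mf: "multiplicity_free d A th"
    and bip: "bipartite d Es A"
    and E: "\<forall>i\<le>d. primitive_idempotent d A th i (E i)"
    and ths: "inj_on ths {0..d}"
    and norm: "normalizing d Es A (th 0)"
    and adj01: "Delta_adj d E (dual_mat d ths Es) 0 1"
    and adj0: "\<forall>j\<le>d. j \<noteq> 1 \<longrightarrow> \<not> Delta_adj d E (dual_mat d ths Es) 0 j"
  shows "th 0 * (ths (d-1) - ths 1) = th 1 * (ths d - ths 0) \<and> th 0 \<noteq> 0 \<and> th 1 \<noteq> 0"
proof -
  obtain P Q Y where basis: "adapted_basis d Es P Q" and Y: "Y \<in> carrier_mat (d+1) (d+1)"
    and AP: "A * P = P * Y" and rows: "\<forall>i\<le>d. (\<Sum>j\<le>d. Y $$ (i, j)) = th 0"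
    using normalizing_adapted_basis[OF Es norm] by blast
  interpret adapted_basis d Es P Q by (fact basis)
  have tri: "irreducible_tridiagonal d Y"
    using tri0 tri1 Es_A_Es_zero_iff[OF A Y AP] unfolding irreducible_tridiagonal_def by auto
  have diag: "\<And>i. i \<le> d \<Longrightarrow> Y $$ (i, i) = 0"
    using bip mat_trace_Es_mult[OF A Y AP] unfolding bipartite_def by auto
  obtain W Wi where "eigenbasis d A th W Wi" using multiplicity_free_eigenbasis[OF A mf] .
  then interpret eigenbasis d A th W Wi .
  have E': "\<And>j. j \<le> d \<Longrightarrow> primitive_idempotent d A th j (E j)" using E by blast
  obtain c where E0: "E 0 * dual_mat d ths Es * A = th 1 \<cdot>\<^sub>m (E 0 * dual_mat d ths Es) + c \<cdot>\<^sub>m E 0"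
    using Delta_adj_single_neighbour[OF E' _ dual_mat_carrier adj0] by blast
  obtain f k where "k < d+1" "f k \<noteq> 0"
    and "\<And>j. j < d+1 \<Longrightarrow> (\<Sum>i<d+1. f i * Y $$ (i, j)) = th 0 * f j"
    and "\<And>j. j < d+1 \<Longrightarrow> (\<Sum>i<d+1. f i * ths i * Y $$ (i, j)) = th 1 * (f j * ths j) + c * f j"
    by (rule left_eigenvector_in_basis[OF _ A dual_mat_carrier P_carrier Q_carrier Y P_mult_Q
          primitive_idempotent_neq_0[OF E'[of 0]] primitive_idempotent_mult_A[OF E'[of 0]] E0 AP
          dual_mat_mult_P])
      (use E' in \<open>auto simp: primitive_idempotent_def\<close>)
  then have rel: "th 0 * ths 1 = th 1 * ths 0 + c" "th 0 * ths (d - 1) = th 1 * ths d + c"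
    using irreducible_tridiagonal_end_relations[OF tri diag, of k f "th 0" ths "th 1" c] d3
    by (auto simp: lessThan_Suc_atMost)
  have th0: "th 0 \<noteq> 0"
    using rows irreducible_tridiagonal_first_row_sum[OF tri diag] irreducible_tridiagonal_nonzero[OF tri]
      d3 by auto
  have "ths 1 \<noteq> ths (d - 1)" using inj_onD[OF ths, of 1 "d - 1"] d3 by auto
  with rel th0 show ?thesis by (auto simp: algebra_simps)
qed

end
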